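(* Let $p,q,r\in\mathbb{N}$ with $p,r>1$, and let $T$ be a group of finite exponent $t\in\mathbb{N}$ (i.e. $g^t=1$ for all $g\in T$). For every labelling $\lambda\colon S(p,q,r)\to T$ there exist a labelling $\mu\colon S(tp,q,tr)\to T$ and a digraph epimorphism $\phi\colon\mathbb{S}(tp,q,tr)\to\mathbb{S}(p,q,r)$ such that $\mu(x)^{-1}\mu(y)=\lambda(\phi(y))$ for every edge $(x,y)$ of $\mathbb{S}(tp,q,tr)$. Moreover, for any $x_0\in S(tp,q,tr)$ and any $\alpha\in T$, $\mu$ can be chosen with $\mu(x_0)=\alpha$.
   Context: For $p,q,r\in\mathbb{N}$ with $p,r>1$, the spiral digraph $\mathbb{S}(p,q,r)=(S(p,q,r);s)$ has $p+q+r-2$ vertices $S(p,q,r)=\{a_1,\dots,a_p\}\cup\{b_1,\dots,b_q\}\cup\{c_1,\dots,c_r\}$ where $a_p=b_1$ and $b_q=c_1$ (and otherwise all distinct), and edge set $s=\{(a_i,a_{i+1}):i\in[p-1]\}\cup\{(b_i,b_{i+1}):i\in[q-1]\}\cup\{(c_i,c_{i+1}):i\in[r-1]\}\cup\{(a_p,a_1),(c_r,c_1)\}$. A digraph epimorphism $\phi\colon(B;s^B)\to(A;s^A)$ is a surjection $B\to A$ with $\{(\phi(x),\phi(y)):(x,y)\in s^B\}=s^A$. *)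

theory Defs
  imports "HOL-Algebra.Group"
begin

text \<open>Vertices are encoded as natural numbers 0..p+q+r-3,
laid out along the path a_1,...,a_p = b_1,...,b_q = c_1,...,c_r:
a_i = i - 1, b_j = p + j - 2, c_k = p + q + k - 3 (1-based indices i, j, k).
This realises exactly the identifications a_p = b_1 and b_q = c_1.\<close>

definition sp_a :: "nat \<Rightarrow> nat \<Rightarrow> nat" where
  "sp_a p i = i - 1"

definition sp_b :: "nat \<Rightarrow> nat \<Rightarrow> nat" where
  "sp_b p j = p + j - 2"

definition sp_c :: "nat \<Rightarrow> nat \<Rightarrow> nat \<Rightarrow> nat" where
  "sp_c p q k = p + q + k - 3"

definition spiral_vertices :: "nat \<Rightarrow> nat \<Rightarrow> nat \<Rightarrow> nat set" where
  "spiral_vertices p q r =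
     {sp_a p i | i. 1 \<le> i \<and> i \<le> p} \<union> {sp_b p j | j. 1 \<le> j \<and> j \<le> q}
     \<union> {sp_c p q k | k. 1 \<le> k \<and> k \<le> r}"

definition spiral_edges :: "nat \<Rightarrow> nat \<Rightarrow> nat \<Rightarrow> (nat \<times> nat) set" where
  "spiral_edges p q r =
     {(sp_a p i, sp_a p (i + 1)) | i. 1 \<le> i \<and> i < p}
     \<union> {(sp_b p j, sp_b p (j + 1)) | j. 1 \<le> j \<and> j < q}
     \<union> {(sp_c p q k, sp_c p q (k + 1)) | k. 1 \<le> k \<and> k < r}
     \<union> {(sp_a p p, sp_a p 1), (sp_c p q r, sp_c p q 1)}"

definition digraph_epi ::
  "('b \<Rightarrow> 'a) \<Rightarrow> 'b set \<Rightarrow> ('b \<times> 'b) set \<Rightarrow> 'a set \<Rightarrow> ('a \<times> 'a) set \<Rightarrow> bool" where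
  "digraph_epi \<phi> B sB A sA \<longleftrightarrow>
     \<phi> ` B = A \<and> {(\<phi> x, \<phi> y) | x y. (x, y) \<in> sB} = sA"

end

theory Submission
  imports Defs
begin

text \<open>The map \<open>\<phi> = spiral_wrap\<close> winds the \<open>a\<close>-cycle of \<open>S(tp,q,tr)\<close> \<open>t\<close> times around the
\<open>a\<close>-cycle of \<open>S(p,q,r)\<close>, maps the \<open>b\<close>-path identically, and winds the \<open>c\<close>-cycle \<open>t\<close> times
around the \<open>c\<close>-cycle; it is a digraph epimorphism. Along the path \<open>0, 1, 2, \<dots>\<close> of
\<open>S(tp,q,tr)\<close> put \<open>\<mu>(v) = \<beta> \<lambda>(\<phi> 1) \<cdots> \<lambda>(\<phi> v)\<close>, so that every path edge
\<open>(x, y)\<close> satisfies \<open>\<mu>(x)\<inverse> \<mu>(y) = \<lambda>(\<phi> y)\<close>. The two closing edges require the product of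
\<open>\<lambda> \<circ> \<phi>\<close> around each big cycle to be trivial: it is the \<open>t\<close>-th power of the product around the
corresponding small cycle, hence \<open>1\<close> because \<open>T\<close> has exponent \<open>t\<close>. The constant \<open>\<beta>\<close> is
chosen to make \<open>\<mu>(x\<^sub>0) = \<alpha>\<close>.\<close>

lemma spiral_vertices_eq_lessThan:
  assumes "1 < p" "1 \<le> q" "1 < r"
  shows "spiral_vertices p q r = {..< p+q+r-2}"
proof
  show "spiral_vertices p q r \<subseteq> {..< p+q+r-2}"
    using assms by (auto simp: spiral_vertices_def sp_a_def sp_b_def sp_c_def)
  show "{..< p+q+r-2} \<subseteq> spiral_vertices p q r"
  proof
    fix v assume v: "v \<in> {..< p+q+r-2}"
    consider "v < p" | "p \<le> v" "v \<le> p+q-2" | "p+q-2 < v" by linarith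
    then show "v \<in> spiral_vertices p q r"
    proof cases
      case 1
      then have "v = sp_a p (v+1) \<and> 1 \<le> v+1 \<and> v+1 \<le> p" by (simp add: sp_a_def)
      then show ?thesis unfolding spiral_vertices_def by blast
    next
      case 2
      then have "v = sp_b p (v+2-p) \<and> 1 \<le> v+2-p \<and> v+2-p \<le> q"
        using assms by (simp add: sp_b_def) linarith
      then show ?thesis unfolding spiral_vertices_def by blast
    next
      case 3
      then have "v = sp_c p q (v+3-p-q) \<and> 1 \<le> v+3-p-q \<and> v+3-p-q \<le> r"
        using v assms by (simp add: sp_c_def) linarith
      then show ?thesis unfolding spiral_vertices_def by blast
    qed
  qed
qed

lemma spiral_edges_eq:
  assumes "1 < p" "1 \<le> q" "1 < r"
  shows "spiral_edges p q r =
    {(v, Suc v) | v. Suc v < p+q+r-2} \<union> {(p-1, 0), (p+q+r-3, p+q-2)}"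
proof
  show "spiral_edges p q r \<subseteq> {(v, Suc v) | v. Suc v < p+q+r-2} \<union> {(p-1, 0), (p+q+r-3, p+q-2)}"
    using assms by (auto simp: spiral_edges_def sp_a_def sp_b_def sp_c_def)
  have "(v, Suc v) \<in> spiral_edges p q r" if v: "Suc v < p+q+r-2" for v
  proof -
    consider "Suc v < p" | "p \<le> Suc v" "Suc v < p+q-1" | "p+q-1 \<le> Suc v" by linarith
    then show ?thesis
    proof cases
      case 1
      then have "(v, Suc v) = (sp_a p (v+1), sp_a p (v+1+1)) \<and> 1 \<le> v+1 \<and> v+1 < p"
        by (simp add: sp_a_def)
      then show ?thesis unfolding spiral_edges_def by blast
    next
      case 2
      then have "(v, Suc v) = (sp_b p (v+2-p), sp_b p (v+2-p+1)) \<and> 1 \<le> v+2-p \<and> v+2-p < q"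
        using assms by (simp add: sp_b_def) linarith
      then show ?thesis unfolding spiral_edges_def by blast
    next
      case 3
      then have "(v, Suc v) = (sp_c p q (v+3-p-q), sp_c p q (v+3-p-q+1))
          \<and> 1 \<le> v+3-p-q \<and> v+3-p-q < r"
        using v assms by (simp add: sp_c_def) linarith
      then show ?thesis unfolding spiral_edges_def by blast
    qed
  qed
  moreover have "(p-1, 0) \<in> spiral_edges p q r" "(p+q+r-3, p+q-2) \<in> spiral_edges p q r"
    using assms by (simp_all add: spiral_edges_def sp_a_def sp_c_def)
  ultimately show "{(v, Suc v) | v. Suc v < p+q+r-2} \<union> {(p-1, 0), (p+q+r-3, p+q-2)}
      \<subseteq> spiral_edges p q r"
    by blast
qed

lemma mult_minus_one_mod:
  fixes t p :: nat
  assumes "0 < t" "0 < p"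
  shows "(t * p - 1) mod p = p - 1"
proof -
  have split: "t * p - 1 = (p - 1) + (t - 1) * p" using assms by (cases t) auto
  show ?thesis unfolding split mod_mult_self1 using assms by simp
qed

lemma mod_Suc_step:
  fixes k M :: nat
  assumes "0 < M"
  shows "Suc (k mod M) < M \<and> Suc k mod M = Suc (k mod M) \<or> k mod M = M - 1 \<and> Suc k mod M = 0"
  using mod_less_divisor[OF assms, of k] by (auto simp: mod_Suc)

lemma spiral_edge_around_a:
  assumes "1 < p" "1 \<le> q" "1 < r"
  shows "(k mod p, Suc k mod p) \<in> spiral_edges p q r"
proof -
  from mod_Suc_step[of p k] assms consider
      (step) "Suc (k mod p) < p" "Suc k mod p = Suc (k mod p)"
    | (wrap) "k mod p = p - 1" "Suc k mod p = 0"
    by auto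
  then show ?thesis
  proof cases
    case step
    then have "Suc (k mod p) < p+q+r-2" using assms by linarith
    then show ?thesis using step spiral_edges_eq[OF assms] by simp
  next
    case wrap
    then show ?thesis using spiral_edges_eq[OF assms] by simp
  qed
qed

lemma spiral_edge_around_c:
  assumes "1 < p" "1 \<le> q" "1 < r"
  shows "(p+q-2 + k mod r, p+q-2 + Suc k mod r) \<in> spiral_edges p q r"
proof -
  from mod_Suc_step[of r k] assms consider
      (step) "Suc (k mod r) < r" "Suc k mod r = Suc (k mod r)"
    | (wrap) "k mod r = r - 1" "Suc k mod r = 0"
    by auto
  then show ?thesis
  proof cases
    case step
    then have "Suc (p+q-2 + k mod r) < p+q+r-2" using assms by linarith
    then show ?thesis using step spiral_edges_eq[OF assms] by simp
  next
    case wrap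
    then have "p+q-2 + k mod r = p+q+r-3" "p+q-2 + Suc k mod r = p+q-2"
      using assms by linarith+
    then show ?thesis using spiral_edges_eq[OF assms] by simp
  qed
qed

definition spiral_wrap :: "nat \<Rightarrow> nat \<Rightarrow> nat \<Rightarrow> nat \<Rightarrow> nat \<Rightarrow> nat" where
  "spiral_wrap p q r t v =
    (if v < t*p then v mod p
     else if v \<le> t*p+q-2 then v - t*p + p
     else p+q-2 + (v - (t*p+q-2)) mod r)"

context
  fixes p q r t :: nat
  assumes p: "1 < p" and q: "1 \<le> q" and r: "1 < r" and t: "1 \<le> t"
begin

lemma spiral_wrap_a: "v < t*p \<Longrightarrow> spiral_wrap p q r t v = v mod p"
  by (simp add: spiral_wrap_def)

lemma spiral_wrap_b: "t*p \<le> v \<Longrightarrow> v \<le> t*p+q-2 \<Longrightarrow> spiral_wrap p q r t v = v - t*p + p"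
  by (simp add: spiral_wrap_def)

lemma spiral_wrap_c: "spiral_wrap p q r t (t*p+q-2 + n) = p+q-2 + n mod r"
proof (cases "n = 0 \<and> q = 1")
  case True
  \<comment> \<open>then \<open>t*p+q-2 = t*p-1\<close> lies in the first branch of the definition\<close>
  then show ?thesis using p t mult_minus_one_mod[of t p] by (simp add: spiral_wrap_def)
next
  case False
  then show ?thesis using p q t by (auto simp: spiral_wrap_def)
qed

lemma spiral_wrap_shift:
  assumes "p - 1 \<le> u" "u < p+q+r-2"
  shows "spiral_wrap p q r t (u + t*p - p) = u"
proof -
  have tp: "p \<le> t*p" using t by simp
  consider "u = p - 1" "u < p+q-2" | "p \<le> u" "u < p+q-2" | "p+q-2 \<le> u" using assms by linarith
  then show ?thesis
  proof cases
    case 1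
    then show ?thesis using tp p t mult_minus_one_mod[of t p] spiral_wrap_a[of "t*p - 1"] by simp
  next
    case 2
    then show ?thesis using tp spiral_wrap_b[of "u + t*p - p"] by simp
  next
    case 3
    then have "u + t*p - p = t*p+q-2 + (u - (p+q-2))" using tp p by linarith
    then have "spiral_wrap p q r t (u + t*p - p) = p+q-2 + (u - (p+q-2)) mod r"
      by (simp only: spiral_wrap_c)
    moreover have "u - (p+q-2) < r" using 3 assms by linarith
    ultimately show ?thesis using 3 by simp
  qed
qed

lemma spiral_wrap_less: "spiral_wrap p q r t v < p+q+r-2"
proof -
  have "v mod p < p" "(v - (t*p+q-2)) mod r < r" using p r by simp_all
  then have "v mod p < p+q+r-2" "p+q-2 + (v - (t*p+q-2)) mod r < p+q+r-2"
    and "\<not> v < t*p \<Longrightarrow> v \<le> t*p+q-2 \<Longrightarrow> v - t*p + p < p+q+r-2"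
    using p q r by linarith+
  then show ?thesis unfolding spiral_wrap_def by auto
qed

lemma spiral_wrap_in_vertices: "spiral_wrap p q r t v \<in> spiral_vertices p q r"
  using spiral_wrap_less spiral_vertices_eq_lessThan[OF p q r] by simp

lemma spiral_wrap_image: "spiral_wrap p q r t ` {..< t*p+q+t*r-2} = {..< p+q+r-2}"
proof -
  have tp: "p \<le> t*p" and tr: "r \<le> t*r" using t by simp_all
  have "u \<in> spiral_wrap p q r t ` {..< t*p+q+t*r-2}" if u: "u < p+q+r-2" for u
  proof (cases "u < p")
    case True
    then have "u < t*p" "u < t*p+q+t*r-2" using tp tr q r by linarith+
    moreover have "spiral_wrap p q r t u = u" using True calculation spiral_wrap_a[of u] by simp
    ultimately show ?thesis by (metis image_eqI lessThan_iff)
  next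
    case False
    then have "spiral_wrap p q r t (u + t*p - p) = u" "u + t*p - p < t*p+q+t*r-2"
      using u tp tr spiral_wrap_shift[of u] by linarith+
    then show ?thesis by (metis image_eqI lessThan_iff)
  qed
  then show ?thesis using spiral_wrap_less by auto
qed

lemma spiral_wrap_corners:
  "spiral_wrap p q r t 0 = 0" "spiral_wrap p q r t (t*p-1) = p-1"
  "spiral_wrap p q r t (t*p+q-2) = p+q-2" "spiral_wrap p q r t (t*p+q+t*r-3) = p+q+r-3"
proof -
  have tp: "p \<le> t*p" and tr: "r \<le> t*r" using t by simp_all
  show "spiral_wrap p q r t 0 = 0" using tp p spiral_wrap_a[of 0] by simp
  show "spiral_wrap p q r t (t*p-1) = p-1"
    using tp p t mult_minus_one_mod[of t p] spiral_wrap_a[of "t*p-1"] by simp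
  show "spiral_wrap p q r t (t*p+q-2) = p+q-2" using spiral_wrap_c[of 0] by simp
  have "t*p+q+t*r-3 = t*p+q-2 + (t*r - 1)" using tp tr p q r by linarith
  then have "spiral_wrap p q r t (t*p+q+t*r-3) = p+q-2 + (t*r - 1) mod r"
    by (simp only: spiral_wrap_c)
  also have "\<dots> = p+q-2 + (r - 1)" using mult_minus_one_mod[of t r] t r by simp
  also have "\<dots> = p+q+r-3" using p q r by linarith
  finally show "spiral_wrap p q r t (t*p+q+t*r-3) = p+q+r-3" .
qed

lemma spiral_wrap_Suc_edge:
  assumes v: "Suc v < t*p+q+t*r-2"
  shows "(spiral_wrap p q r t v, spiral_wrap p q r t (Suc v)) \<in> spiral_edges p q r"
proof -
  have tp: "p \<le> t*p" using t by simp
  consider "Suc v < t*p" | "t*p - 1 \<le> v" "Suc v \<le> t*p+q-2" | "t*p+q-2 \<le> v" by linarith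
  then show ?thesis
  proof cases
    case 1
    then show ?thesis using spiral_wrap_a spiral_edge_around_a[OF p q r] by simp
  next
    case 2
    define u where "u = v + p - t*p"
    have "v = u + t*p - p" "Suc v = Suc u + t*p - p" "p - 1 \<le> u" "Suc u < p+q+r-2"
      using 2 tp p q r unfolding u_def by linarith+
    then show ?thesis
      using spiral_wrap_shift[of u] spiral_wrap_shift[of "Suc u"] spiral_edges_eq[OF p q r] by simp
  next
    case 3
    then obtain k where "v = t*p+q-2 + k" "Suc v = t*p+q-2 + Suc k" using le_Suc_ex by force
    then show ?thesis using spiral_wrap_c spiral_edge_around_c[OF p q r] by (simp only:)
  qed
qed

lemma spiral_wrap_edge:
  assumes "(x, y) \<in> spiral_edges (t*p) q (t*r)"
  shows "(spiral_wrap p q r t x, spiral_wrap p q r t y) \<in> spiral_edges p q r"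
proof -
  have big: "1 < t*p" "1 < t*r" using t p r by (simp_all add: less_le_trans)
  from assms consider "y = Suc x" "Suc x < t*p+q+t*r-2"
    | "x = t*p-1" "y = 0" | "x = t*p+q+t*r-3" "y = t*p+q-2"
    unfolding spiral_edges_eq[OF big(1) q big(2)] by blast
  then show ?thesis
  proof cases
    case 1
    then show ?thesis using spiral_wrap_Suc_edge by simp
  next
    case 2
    then show ?thesis using spiral_wrap_corners(1,2) spiral_edges_eq[OF p q r] by simp
  next
    case 3
    then show ?thesis using spiral_wrap_corners(3,4) spiral_edges_eq[OF p q r] by simp
  qed
qed

lemma spiral_wrap_Suc_edge_preimage:
  assumes u: "Suc u < p+q+r-2"
  shows "\<exists>v. Suc v < t*p+q+t*r-2
    \<and> spiral_wrap p q r t v = u \<and> spiral_wrap p q r t (Suc v) = Suc u"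
proof -
  have tp: "p \<le> t*p" and tr: "r \<le> t*r" using t by simp_all
  show ?thesis
  proof (cases "Suc u < p")
    case True
    then have "Suc u < t*p" "Suc u < t*p+q+t*r-2" using tp tr q r by linarith+
    then show ?thesis using spiral_wrap_a[of u] spiral_wrap_a[of "Suc u"] True by auto
  next
    case False
    define v where "v = u + t*p - p"
    have "Suc v < t*p+q+t*r-2" and Suc_v: "Suc v = Suc u + t*p - p"
      using False u tp tr unfolding v_def by linarith+
    moreover have "spiral_wrap p q r t v = u"
      unfolding v_def using False u by (intro spiral_wrap_shift) simp_all
    moreover have "spiral_wrap p q r t (Suc v) = Suc u"
      unfolding Suc_v using False u by (intro spiral_wrap_shift) simp_all
    ultimately show ?thesis by blast
  qed
qed

lemma spiral_wrap_edge_preimage: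
  assumes "e \<in> spiral_edges p q r"
  shows "\<exists>x y. (x, y) \<in> spiral_edges (t*p) q (t*r)
    \<and> e = (spiral_wrap p q r t x, spiral_wrap p q r t y)"
proof -
  have big: "1 < t*p" "1 < t*r" using t p r by (simp_all add: less_le_trans)
  note big_edges = spiral_edges_eq[OF big(1) q big(2)]
  from assms consider u where "e = (u, Suc u)" "Suc u < p+q+r-2"
    | "e = (p-1, 0)" | "e = (p+q+r-3, p+q-2)"
    unfolding spiral_edges_eq[OF p q r] by blast
  then show ?thesis
  proof cases
    case (1 u)
    then obtain v where "Suc v < t*p+q+t*r-2" "spiral_wrap p q r t v = u"
      "spiral_wrap p q r t (Suc v) = Suc u"
      using spiral_wrap_Suc_edge_preimage by blast
    then show ?thesis unfolding big_edges using 1 by (intro exI[of _ v] exI[of _ "Suc v"]) simp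
  next
    case 2
    then show ?thesis unfolding big_edges
      using spiral_wrap_corners(1,2) by (intro exI[of _ "t*p-1"] exI[of _ 0]) simp
  next
    case 3
    then show ?thesis unfolding big_edges
      using spiral_wrap_corners(3,4) by (intro exI[of _ "t*p+q+t*r-3"] exI[of _ "t*p+q-2"]) simp
  qed
qed

lemma digraph_epi_spiral_wrap:
  "digraph_epi (spiral_wrap p q r t) (spiral_vertices (t*p) q (t*r)) (spiral_edges (t*p) q (t*r))
     (spiral_vertices p q r) (spiral_edges p q r)"
proof -
  have big: "1 < t*p" "1 < t*r" using t p r by (simp_all add: less_le_trans)
  have "spiral_wrap p q r t ` spiral_vertices (t*p) q (t*r) = spiral_vertices p q r"
    using spiral_wrap_image
    by (simp add: spiral_vertices_eq_lessThan[OF p q r]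
        spiral_vertices_eq_lessThan[OF big(1) q big(2)])
  moreover have "{(spiral_wrap p q r t x, spiral_wrap p q r t y) | x y.
      (x, y) \<in> spiral_edges (t*p) q (t*r)} = spiral_edges p q r"
  proof (intro equalityI subsetI)
    fix e assume "e \<in> {(spiral_wrap p q r t x, spiral_wrap p q r t y) | x y.
        (x, y) \<in> spiral_edges (t*p) q (t*r)}"
    then show "e \<in> spiral_edges p q r" using spiral_wrap_edge by blast
  next
    fix e assume "e \<in> spiral_edges p q r"
    then show "e \<in> {(spiral_wrap p q r t x, spiral_wrap p q r t y) | x y.
        (x, y) \<in> spiral_edges (t*p) q (t*r)}"
      using spiral_wrap_edge_preimage by blast
  qed
  ultimately show ?thesis unfolding digraph_epi_def ..
qed

end

primrec prefix_prod :: "('a, 'b) monoid_scheme \<Rightarrow> (nat \<Rightarrow> 'a) \<Rightarrow> nat \<Rightarrow> 'a" where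
  "prefix_prod G h 0 = \<one>\<^bsub>G\<^esub>"
| "prefix_prod G h (Suc n) = prefix_prod G h n \<otimes>\<^bsub>G\<^esub> h (Suc n)"

context group
begin

lemma prefix_prod_closed: "(\<And>w. h w \<in> carrier G) \<Longrightarrow> prefix_prod G h n \<in> carrier G"
  by (induction n) auto

lemma prefix_prod_cong:
  "(\<And>w. 0 < w \<Longrightarrow> w \<le> n \<Longrightarrow> h w = h' w) \<Longrightarrow> prefix_prod G h n = prefix_prod G h' n"
  by (induction n) auto

lemma prefix_prod_add:
  assumes "\<And>w. h w \<in> carrier G"
  shows "prefix_prod G h (m + n) = prefix_prod G h m \<otimes> prefix_prod G (\<lambda>w. h (m + w)) n"
  using assms by (induction n) (auto simp: m_assoc prefix_prod_closed)

lemma prefix_prod_periodic_pow: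
  assumes "\<And>w. h w \<in> carrier G" and "\<And>w. h (w + k) = h w"
  shows "prefix_prod G h (t * k) = prefix_prod G h k [^] t"
proof (induction t)
  case (Suc t)
  have shift: "h (j * k + w) = h w" for j w
  proof (induction j)
    case (Suc j)
    then show ?case using assms(2)[of "j * k + w"] by (simp add: ac_simps)
  qed simp
  have "prefix_prod G h (Suc t * k) = prefix_prod G h (t * k) \<otimes> prefix_prod G h k"
    by (simp add: add.commute[of k] prefix_prod_add[OF assms(1)] shift)
  then show ?case
    using Suc prefix_prod_closed[OF assms(1)] by (simp add: nat_pow_mult[symmetric] nat_pow_Suc2)
qed simp

lemma inv_mult_left_translate:
  assumes "b \<in> carrier G" "x \<in> carrier G" "y \<in> carrier G"
  shows "inv (b \<otimes> x) \<otimes> (b \<otimes> y) = inv x \<otimes> y"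
  using assms by (simp add: inv_mult_group flip: m_assoc) (simp add: m_assoc)

lemma prefix_prod_periodic_cycle:
  assumes closed: "\<And>w. h w \<in> carrier G" and exponent: "\<forall>g \<in> carrier G. g [^] t = \<one>"
    and "0 < k" "0 < t" and periodic: "\<And>w. w < t * k \<Longrightarrow> h (m + w) = h (m + w mod k)"
  shows "prefix_prod G h (m + (t * k - 1)) \<otimes> h m = prefix_prod G h m"
proof -
  define c where "c w = h (m + w mod k)" for w
  have c_closed: "\<And>w. c w \<in> carrier G" by (simp add: c_def closed)
  have tk: "t * k = Suc (t * k - 1)" using \<open>0 < k\<close> \<open>0 < t\<close> by simp
  have "prefix_prod G (\<lambda>w. h (m + w)) (t * k - 1) \<otimes> h m
      = prefix_prod G c (t * k - 1) \<otimes> c (t * k)"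
  proof -
    have "prefix_prod G (\<lambda>w. h (m + w)) (t * k - 1) = prefix_prod G c (t * k - 1)"
      by (rule prefix_prod_cong) (simp add: c_def periodic)
    moreover have "c (t * k) = h m" by (simp add: c_def)
    ultimately show ?thesis by simp
  qed
  also have "\<dots> = prefix_prod G c (t * k)"
    by (metis tk prefix_prod.simps(2))
  also have "\<dots> = \<one>"
  proof -
    have "prefix_prod G c (t * k) = prefix_prod G c k [^] t"
      by (rule prefix_prod_periodic_pow[OF c_closed]) (simp add: c_def)
    then show ?thesis using exponent prefix_prod_closed[OF c_closed] by simp
  qed
  finally show ?thesis
    using closed prefix_prod_closed[OF closed]
    by (simp add: prefix_prod_add[OF closed] m_assoc)
qed

lemma prefix_prod_spiral_edge:
  assumes p: "1 < p" and q: "1 \<le> q" and r: "1 < r" and t: "1 \<le> t"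
    and closed: "\<And>w. h w \<in> carrier G" and exponent: "\<forall>g \<in> carrier G. g [^] t = \<one>"
    and a_periodic: "\<And>w. w < t*p \<Longrightarrow> h w = h (w mod p)"
    and c_periodic: "\<And>w. w < t*r \<Longrightarrow> h (t*p+q-2 + w) = h (t*p+q-2 + w mod r)"
    and edge: "(x, y) \<in> spiral_edges (t*p) q (t*r)"
  shows "prefix_prod G h x \<otimes> h y = prefix_prod G h y"
proof -
  have big: "1 < t*p" "1 < t*r" using p r t by (simp_all add: less_le_trans)
  have last: "t*p+q+t*r-3 = (t*p+q-2) + (t*r - 1)" using big q by linarith
  from edge consider "y = Suc x" | "x = t*p - 1" "y = 0"
    | "x = (t*p+q-2) + (t*r - 1)" "y = t*p+q-2"
    unfolding spiral_edges_eq[OF big(1) q big(2)] last by blast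
  then show ?thesis
  proof cases
    case 1
    then show ?thesis by simp
  next
    case 2
    moreover have "prefix_prod G h (0 + (t*p - 1)) \<otimes> h 0 = prefix_prod G h 0"
      by (rule prefix_prod_periodic_cycle[OF closed exponent]) (use p t a_periodic in simp_all)
    ultimately show ?thesis by simp
  next
    case 3
    moreover have
      "prefix_prod G h ((t*p+q-2) + (t*r - 1)) \<otimes> h (t*p+q-2) = prefix_prod G h (t*p+q-2)"
      by (rule prefix_prod_periodic_cycle[OF closed exponent]) (use r t c_periodic in simp_all)
    ultimately show ?thesis by simp
  qed
qed

lemma prefix_prod_spiral_wrap_edge:
  assumes p: "1 < p" and q: "1 \<le> q" and r: "1 < r" and t: "1 \<le> t"
    and exponent: "\<forall>g \<in> carrier G. g [^] t = \<one>"
    and lam: "lam \<in> spiral_vertices p q r \<rightarrow> carrier G"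
    and edge: "(x, y) \<in> spiral_edges (t*p) q (t*r)"
  defines "h \<equiv> \<lambda>w. lam (spiral_wrap p q r t w)"
  shows "prefix_prod G h x \<otimes> h y = prefix_prod G h y"
proof (rule prefix_prod_spiral_edge[OF p q r t _ exponent _ _ edge])
  show "h w \<in> carrier G" for w
    using lam spiral_wrap_in_vertices[OF p q r t] by (auto simp: h_def)
  show "h w = h (w mod p)" if "w < t*p" for w
  proof -
    have "w mod p < p" "p \<le> t*p" using p t by simp_all
    then have "w mod p < t*p" by linarith
    then show ?thesis using that spiral_wrap_a[OF p q r t] by (simp add: h_def)
  qed
  show "h (t*p+q-2 + w) = h (t*p+q-2 + w mod r)" for w
    using spiral_wrap_c[OF p q r t] by (simp add: h_def)
qed

end

theorem lemma4p1:
  fixes G (structure)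
    and p q r t :: nat and lam :: "nat \<Rightarrow> 'a"
  assumes "group G"
    and "p > 1" and "r > 1" and "q \<ge> 1"
    and "t \<ge> 1"
    and "\<forall>g \<in> carrier G. g [^] t = \<one>"
    and "lam \<in> spiral_vertices p q r \<rightarrow> carrier G"
    and "x0 \<in> spiral_vertices (t * p) q (t * r)"
    and "\<alpha> \<in> carrier G"
  shows "\<exists>\<mu> \<phi>. \<mu> \<in> spiral_vertices (t * p) q (t * r) \<rightarrow> carrier G
     \<and> digraph_epi \<phi> (spiral_vertices (t * p) q (t * r)) (spiral_edges (t * p) q (t * r))
                      (spiral_vertices p q r) (spiral_edges p q r)
     \<and> (\<forall>(x, y) \<in> spiral_edges (t * p) q (t * r). inv (\<mu> x) \<otimes> \<mu> y = lam (\<phi> y))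
     \<and> \<mu> x0 = \<alpha>"
proof -
  interpret group G by fact
  note p = assms(2) and r = assms(3) and q = assms(4) and t = assms(5)
  define h where "h = (\<lambda>w. lam (spiral_wrap p q r t w))"
  have closed: "h w \<in> carrier G" for w
    using assms(7) spiral_wrap_in_vertices[OF p q r t] by (auto simp: h_def)
  have edge: "prefix_prod G h x \<otimes> h y = prefix_prod G h y"
    if "(x, y) \<in> spiral_edges (t * p) q (t * r)" for x y
    unfolding h_def by (rule prefix_prod_spiral_wrap_edge[OF p q r t assms(6,7) that])
  note prefix_closed = prefix_prod_closed[OF closed]
  define \<beta> where "\<beta> = \<alpha> \<otimes> inv (prefix_prod G h x0)"
  have \<beta>_closed: "\<beta> \<in> carrier G" using assms(9) prefix_closed by (simp add: \<beta>_def)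
  define \<mu> where "\<mu> v = \<beta> \<otimes> prefix_prod G h v" for v
  have "inv (\<mu> x) \<otimes> \<mu> y = h y" if "(x, y) \<in> spiral_edges (t * p) q (t * r)" for x y
    using edge[OF that] \<beta>_closed closed prefix_closed
    by (simp add: \<mu>_def inv_mult_left_translate inv_solve_left')
  moreover have "\<mu> x0 = \<alpha>"
    using assms(9) prefix_closed by (simp add: \<mu>_def \<beta>_def m_assoc)
  moreover have "\<mu> v \<in> carrier G" for v
    using \<beta>_closed prefix_closed by (simp add: \<mu>_def)
  ultimately show ?thesis
    using digraph_epi_spiral_wrap[OF p q r t] unfolding h_def by (intro exI[of _ \<mu>] exI) auto
qed

end
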